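(* Let $\hat{x}$ be the final value of the vector $x$ in Algorithm 1. If $\|\hat{x}\|_1=k$, then $F(\hat{x})\ge c\tau$.
   Context: Setting: finite ground set $N$ whose elements arrive one at a time in a stream, non-negative submodular $f\colon 2^N\to\mathbb{R}_{\ge 0}$, positive integer $k$. $F$ is the multilinear extension of $f$: $F(x)=\sum_{A\subseteq N} f(A)\prod_{u\in A}x_u\prod_{u\notin A}(1-x_u)$ for $x\in[0,1]^N$, and $\partial_uF(x)=F(x\vee \mathbf{1}_u)-F(x\wedge\mathbf{1}_{N\setminus\{u\}})$ (coordinatewise max/min with characteristic vectors). $\mathrm{supp}(x)=\{u: x_u>0\}$. Algorithm 1 has parameters $p\in(0,1)$, $c>0$, $\alpha\in(0,1]$ and a number $\tau$ (an estimate of the optimal value). It starts with $x=\mathbf{0}$, and when an element $u$ arrives, if $\partial_uF(x)\ge c\tau/k$ it sets $x\leftarrow x+\min\{p,\,k-\|x\|_1\}\cdot\mathbf{1}_u$ (otherwise $x$ is unchanged). After the stream ends, it computes a random set $S_1$ with $|S_1|\le k$ and $\mathbb{E}[f(S_1)]\ge F(x)$ (by rounding $x$), and a random set $S_2\subseteq\mathrm{supp}(x)$ with $|S_2|\le k$ and $\mathbb{E}[f(S_2)]\ge\alpha\cdot\max_{S\subseteq\mathrm{supp}(x),|S|\le k}f(S)$, and outputs the better of $S_1,S_2$. *)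

theory Defs
  imports Complex_Main
begin

text \<open>Set functions on a finite ground set N; vectors in [0,1]^N are functions
  'a => real (only values on N matter).\<close>

definition nonneg_on :: "'a set \<Rightarrow> ('a set \<Rightarrow> real) \<Rightarrow> bool" where
  "nonneg_on N f \<longleftrightarrow> (\<forall>A. A \<subseteq> N \<longrightarrow> f A \<ge> 0)"

definition submodular_on :: "'a set \<Rightarrow> ('a set \<Rightarrow> real) \<Rightarrow> bool" where
  "submodular_on N f \<longleftrightarrow>
     (\<forall>A B. A \<subseteq> N \<longrightarrow> B \<subseteq> N \<longrightarrow> f (A \<union> B) + f (A \<inter> B) \<le> f A + f B)"

definition multilinear_ext :: "'a set \<Rightarrow> ('a set \<Rightarrow> real) \<Rightarrow> ('a \<Rightarrow> real) \<Rightarrow> real" where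
  "multilinear_ext N f x =
     (\<Sum>A\<in>Pow N. f A * (\<Prod>u\<in>A. x u) * (\<Prod>u\<in>N - A. 1 - x u))"

definition char_vec :: "'a set \<Rightarrow> 'a \<Rightarrow> real" where
  "char_vec S = (\<lambda>v. if v \<in> S then 1 else 0)"

definition partial_F :: "'a set \<Rightarrow> ('a set \<Rightarrow> real) \<Rightarrow> 'a \<Rightarrow> ('a \<Rightarrow> real) \<Rightarrow> real" where
  "partial_F N f u x =
     multilinear_ext N f (\<lambda>v. max (x v) (char_vec {u} v))
     - multilinear_ext N f (\<lambda>v. min (x v) (char_vec (N - {u}) v))"

definition norm1 :: "'a set \<Rightarrow> ('a \<Rightarrow> real) \<Rightarrow> real" where
  "norm1 N x = (\<Sum>v\<in>N. \<bar>x v\<bar>)"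

definition alg1_step :: "'a set \<Rightarrow> ('a set \<Rightarrow> real) \<Rightarrow> nat \<Rightarrow> real \<Rightarrow> real \<Rightarrow> real
    \<Rightarrow> ('a \<Rightarrow> real) \<Rightarrow> 'a \<Rightarrow> ('a \<Rightarrow> real)" where
  "alg1_step N f k p c \<tau> x u =
     (if partial_F N f u x \<ge> c * \<tau> / real k
      then (\<lambda>v. x v + min p (real k - norm1 N x) * char_vec {u} v)
      else x)"

definition alg1_x :: "'a set \<Rightarrow> ('a set \<Rightarrow> real) \<Rightarrow> nat \<Rightarrow> real \<Rightarrow> real \<Rightarrow> real
    \<Rightarrow> 'a list \<Rightarrow> ('a \<Rightarrow> real)" where
  "alg1_x N f k p c \<tau> stream = foldl (alg1_step N f k p c \<tau>) (\<lambda>_. 0) stream"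

end

theory Submission
  imports Defs
begin

(* The multilinear extension F is affine in each coordinate, and on [0,1]^N its slope in
  coordinate u is exactly partial_u F(x). Every element arrives only once, so an accepted
  element u raises x_u from 0 to some d >= 0 and thereby raises F by
  d * partial_u F(x) >= d * c tau / k. Summing over the stream gives
  F(x) >= F(0) + ||x||_1 * c tau / k = f({}) + ||x||_1 * c tau / k, which is at least c tau
  when ||x||_1 = k since f({}) >= 0. *)

lemma multilinear_ext_cong:
  assumes "\<And>v. v \<in> N \<Longrightarrow> y v = z v"
  shows "multilinear_ext N f y = multilinear_ext N f z"
  unfolding multilinear_ext_def
  by (rule sum.cong[OF refl]) (use assms in \<open>auto intro!: prod.cong\<close>)

lemma multilinear_ext_insert:
  assumes "finite M" "u \<notin> M"
  shows "multilinear_ext (insert u M) f y =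
    (1 - y u) * multilinear_ext M f y + y u * multilinear_ext M (\<lambda>A. f (insert u A)) y"
proof -
  let ?P = "\<lambda>A. (\<Prod>v\<in>A. y v) * (\<Prod>v\<in>M - A. 1 - y v)"
  have disjoint: "Pow M \<inter> insert u ` Pow M = {}"
    using assms by auto
  have inj: "inj_on (insert u) (Pow M)"
    using assms(2) by (auto simp: inj_on_def)
  have without_u: "f A * (\<Prod>v\<in>A. y v) * (\<Prod>v\<in>insert u M - A. 1 - y v) = (1 - y u) * (f A * ?P A)"
    if "A \<subseteq> M" for A
  proof -
    have "insert u M - A = insert u (M - A)" "finite (M - A)"
      using that assms by auto
    then show ?thesis
      using assms(2) by simp
  qed
  have with_u: "f (insert u A) * (\<Prod>v\<in>insert u A. y v) * (\<Prod>v\<in>insert u M - insert u A. 1 - y v)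
      = y u * (f (insert u A) * ?P A)"
    if "A \<subseteq> M" for A
  proof -
    have "insert u M - insert u A = M - A" "finite A" "u \<notin> A"
      using that assms finite_subset by auto
    then show ?thesis
      by simp
  qed
  have "multilinear_ext (insert u M) f y =
      (\<Sum>A\<in>Pow M. f A * (\<Prod>v\<in>A. y v) * (\<Prod>v\<in>insert u M - A. 1 - y v))
      + (\<Sum>A\<in>Pow M. f (insert u A) * (\<Prod>v\<in>insert u A. y v) * (\<Prod>v\<in>insert u M - insert u A. 1 - y v))"
    unfolding multilinear_ext_def Pow_insert
    using assms(1) by (simp add: sum.union_disjoint[OF _ _ disjoint] sum.reindex[OF inj])
  also have "\<dots> = (\<Sum>A\<in>Pow M. (1 - y u) * (f A * ?P A)) + (\<Sum>A\<in>Pow M. y u * (f (insert u A) * ?P A))"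
    using without_u with_u by (intro arg_cong2[where f = "(+)"] sum.cong) auto
  finally show ?thesis
    unfolding multilinear_ext_def by (simp add: sum_distrib_left mult.assoc)
qed

lemma multilinear_ext_zero:
  assumes "finite N"
  shows "multilinear_ext N f (\<lambda>_. 0) = f {}"
  using assms
proof (induction N rule: finite_induct)
  case empty
  then show ?case
    by (simp add: multilinear_ext_def)
next
  case (insert u M)
  then show ?case
    by (simp add: multilinear_ext_insert)
qed

lemma multilinear_ext_fun_upd:
  assumes "finite N" "u \<in> N"
  shows "multilinear_ext N f (y(u := d)) =
    multilinear_ext N f (y(u := 0)) + d * (multilinear_ext N f (y(u := 1)) - multilinear_ext N f (y(u := 0)))"
proof -
  define M where "M = N - {u}"
  have N: "N = insert u M" "u \<notin> M" "finite M"
    using assms by (auto simp: M_def)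
  have independent_of_u: "multilinear_ext M g (y(u := t)) = multilinear_ext M g y" for g t
    using N(2) by (intro multilinear_ext_cong) auto
  show ?thesis
    unfolding N(1) multilinear_ext_insert[OF N(3,2)] independent_of_u
    by (simp add: algebra_simps)
qed

lemma partial_F_eq_diff:
  assumes "u \<in> N" "\<And>v. v \<in> N \<Longrightarrow> 0 \<le> y v \<and> y v \<le> 1"
  shows "partial_F N f u y = multilinear_ext N f (y(u := 1)) - multilinear_ext N f (y(u := 0))"
proof -
  have "multilinear_ext N f (\<lambda>v. max (y v) (char_vec {u} v)) = multilinear_ext N f (y(u := 1))"
    "multilinear_ext N f (\<lambda>v. min (y v) (char_vec (N - {u}) v)) = multilinear_ext N f (y(u := 0))"
    using assms by (auto simp: char_vec_def intro!: multilinear_ext_cong)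
  then show ?thesis
    unfolding partial_F_def by simp
qed

lemma multilinear_ext_increase_coordinate:
  assumes "finite N" "u \<in> N" "y u = 0" "\<And>v. v \<in> N \<Longrightarrow> 0 \<le> y v \<and> y v \<le> 1"
  shows "multilinear_ext N f (y(u := d)) = multilinear_ext N f y + d * partial_F N f u y"
proof -
  have "y(u := 0) = y"
    using assms(3) by auto
  then show ?thesis
    using multilinear_ext_fun_upd[OF assms(1,2), of f y d] partial_F_eq_diff[where f = f, OF assms(2,4)]
    by (simp only:)
qed

lemma norm1_fun_upd:
  assumes "finite N" "u \<in> N"
  shows "norm1 N (x(u := d)) = norm1 N x - \<bar>x u\<bar> + \<bar>d\<bar>"
proof -
  have "(\<Sum>v\<in>N - {u}. \<bar>(x(u := d)) v\<bar>) = (\<Sum>v\<in>N - {u}. \<bar>x v\<bar>)"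
    by (rule sum.cong) auto
  then show ?thesis
    unfolding norm1_def sum.remove[OF assms] by simp
qed

lemma alg1_x_Nil [simp]: "alg1_x N f k p c \<tau> [] = (\<lambda>_. 0)"
  by (simp add: alg1_x_def)

lemma alg1_x_snoc [simp]:
  "alg1_x N f k p c \<tau> (xs @ [u]) = alg1_step N f k p c \<tau> (alg1_x N f k p c \<tau> xs) u"
  by (simp add: alg1_x_def)

lemma alg1_step_other: "v \<noteq> u \<Longrightarrow> alg1_step N f k p c \<tau> x u v = x v"
  by (simp add: alg1_step_def char_vec_def)

lemma alg1_x_outside: "v \<notin> set xs \<Longrightarrow> alg1_x N f k p c \<tau> xs v = 0"
  by (induction xs rule: rev_induct) (auto simp: alg1_step_other)

lemma alg1_step_gain:
  fixes f :: "'a set \<Rightarrow> real" and c \<tau> :: real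
  assumes "finite N" "u \<in> N" "x u = 0" "\<And>v. 0 \<le> x v \<and> x v \<le> 1" "norm1 N x \<le> real k"
    and "0 \<le> p" "p \<le> 1"
  defines "x' \<equiv> alg1_step N f k p c \<tau> x u"
  shows "0 \<le> x' v \<and> x' v \<le> 1" and "norm1 N x' \<le> real k"
    and "multilinear_ext N f x + (norm1 N x' - norm1 N x) * (c * \<tau> / real k) \<le> multilinear_ext N f x'"
proof -
  have "\<exists>d. x' = x(u := d) \<and> 0 \<le> d \<and> d \<le> p \<and> norm1 N x + d \<le> real k
      \<and> d * (c * \<tau> / real k) \<le> d * partial_F N f u x"
  proof (cases "c * \<tau> / real k \<le> partial_F N f u x")
    case True
    then have "x' = x(u := min p (real k - norm1 N x))"
      using assms(3) by (auto simp: x'_def alg1_step_def char_vec_def)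
    then show ?thesis
      using True assms(5,6) mult_left_mono[OF True, of "min p (real k - norm1 N x)"]
      by (intro exI[of _ "min p (real k - norm1 N x)"]) auto
  next
    case False
    then have "x' = x(u := 0)"
      using assms(3) by (auto simp: x'_def alg1_step_def)
    then show ?thesis
      using assms(5,6) by (intro exI[of _ 0]) auto
  qed
  then obtain d where x': "x' = x(u := d)" and d: "0 \<le> d" "d \<le> p" "norm1 N x + d \<le> real k"
    and gain: "d * (c * \<tau> / real k) \<le> d * partial_F N f u x"
    by blast
  have norm: "norm1 N x' = norm1 N x + d"
    using norm1_fun_upd[OF assms(1,2)] assms(3) d(1) by (simp add: x')
  have "multilinear_ext N f x' = multilinear_ext N f x + d * partial_F N f u x"
    unfolding x' using multilinear_ext_increase_coordinate[of N u x] assms(1-4) by blast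
  then show "multilinear_ext N f x + (norm1 N x' - norm1 N x) * (c * \<tau> / real k) \<le> multilinear_ext N f x'"
    using gain norm by simp
  show "0 \<le> x' v \<and> x' v \<le> 1" "norm1 N x' \<le> real k"
    using assms(4,7) d norm by (auto simp: x')
qed

lemma alg1_x_invariant:
  assumes "finite N" "0 \<le> p" "p \<le> 1" "distinct xs" "set xs \<subseteq> N"
  shows "(\<forall>v. 0 \<le> alg1_x N f k p c \<tau> xs v \<and> alg1_x N f k p c \<tau> xs v \<le> 1)
    \<and> norm1 N (alg1_x N f k p c \<tau> xs) \<le> real k
    \<and> f {} + norm1 N (alg1_x N f k p c \<tau> xs) * (c * \<tau> / real k) \<le> multilinear_ext N f (alg1_x N f k p c \<tau> xs)"
  using assms(4,5)
proof (induction xs rule: rev_induct)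
  case Nil
  show ?case
    using multilinear_ext_zero[OF assms(1)] by (simp add: norm1_def)
next
  case (snoc u xs)
  let ?x = "alg1_x N f k p c \<tau> xs"
  have u: "u \<in> N" "?x u = 0"
    using snoc.prems alg1_x_outside[of u xs] by auto
  have IH: "\<And>v. 0 \<le> ?x v \<and> ?x v \<le> 1" "norm1 N ?x \<le> real k"
    "f {} + norm1 N ?x * (c * \<tau> / real k) \<le> multilinear_ext N f ?x"
    using snoc by auto
  show ?case
    using alg1_step_gain[where f = f and c = c and \<tau> = \<tau>, OF assms(1) u IH(1,2) assms(2,3)] IH(3)
    by (simp add: algebra_simps)
qed

theorem lemma3p3:
  fixes N :: "'a set" and f :: "'a set \<Rightarrow> real" and k :: nat
    and p c \<alpha> \<tau> :: real and stream :: "'a list"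
  assumes "finite N"
    and "nonneg_on N f" and "submodular_on N f"
    and "k > 0"
    and "0 < p" and "p < 1" and "c > 0" and "0 < \<alpha>" and "\<alpha> \<le> 1"
    and "distinct stream" and "set stream = N"
    and "norm1 N (alg1_x N f k p c \<tau> stream) = real k"
  shows "multilinear_ext N f (alg1_x N f k p c \<tau> stream) \<ge> c * \<tau>"
proof -
  have "f {} + real k * (c * \<tau> / real k) \<le> multilinear_ext N f (alg1_x N f k p c \<tau> stream)"
    using alg1_x_invariant[of N p stream f k c \<tau>] assms(1,5,6,10,11,12) by simp
  moreover have "f {} \<ge> 0"
    using assms(2) by (simp add: nonneg_on_def)
  ultimately show ?thesis
    using assms(4) by simp
qed

end
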